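(* For every pair of integers $k\ge3$ and $f\ge1$ there is $n_1=n_1(k,f)$ such that for every $n\ge n_1$ divisible by $k$, the graph $B_{k,n/k}$ (which has $n$ vertices) is $\frac{1}{2k^2}$-far from being induced $\{C_4,B_{k,f}\}$-free.
   Context: For integers $k\ge3$ and $m\ge1$, $B_{k,m}$ is the graph obtained from the cycle $C_k$ by replacing each vertex by a clique of size $m$ and each edge by a complete bipartite graph between the corresponding cliques (non-adjacent vertices of $C_k$ give empty bipartite graphs). An $n$-vertex graph is $\varepsilon$-far from a property if at least $\varepsilon n^2$ edge additions/deletions are needed to obtain the property. A graph is induced $\mathcal F$-free if it contains no induced subgraph isomorphic to any member of $\mathcal F$. *)

theory Defs
  imports Complex_Main
begin

type_synonym 'a graph = "'a set \<times> 'a set set"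

definition simple_graph :: "'a graph \<Rightarrow> bool" where
  "simple_graph G \<longleftrightarrow> finite (fst G) \<and>
     (\<forall>e\<in>snd G. \<exists>u v. u \<noteq> v \<and> u \<in> fst G \<and> v \<in> fst G \<and> e = {u, v})"

definition contains_induced :: "'a graph \<Rightarrow> 'b graph \<Rightarrow> bool" where
  "contains_induced G H \<longleftrightarrow> (\<exists>\<phi>. inj_on \<phi> (fst H) \<and> \<phi> ` fst H \<subseteq> fst G \<and>
     (\<forall>u\<in>fst H. \<forall>v\<in>fst H. u \<noteq> v \<longrightarrow>
        ({u, v} \<in> snd H \<longleftrightarrow> {\<phi> u, \<phi> v} \<in> snd G)))"

definition cycle_graph :: "nat \<Rightarrow> nat graph" where
  "cycle_graph k = ({0..<k}, {{i, (i + 1) mod k} | i. i < k})"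

text \<open>B_{k,m}: blow-up of C_k where each vertex becomes a clique of size m and
  each edge a complete bipartite graph. Vertex (i,j) lies in the i-th clique.\<close>
definition blowup :: "nat \<Rightarrow> nat \<Rightarrow> (nat \<times> nat) graph" where
  "blowup k m = ({0..<k} \<times> {0..<m},
     {{(i, j), (i', j')} | i j i' j'. i < k \<and> j < m \<and> i' < k \<and> j' < m \<and>
        (i, j) \<noteq> (i', j') \<and> (i' = i \<or> i' = (i + 1) mod k)})"

definition far_from :: "real \<Rightarrow> ('a graph \<Rightarrow> bool) \<Rightarrow> 'a graph \<Rightarrow> bool" where
  "far_from eps P G \<longleftrightarrow> (\<forall>E'. simple_graph (fst G, E') \<and> P (fst G, E') \<longrightarrow>
      real (card ((snd G - E') \<union> (E' - snd G))) \<ge> eps * real (card (fst G)) ^ 2)"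

definition induced_C4_Bkf_free :: "nat \<Rightarrow> nat \<Rightarrow> 'a graph \<Rightarrow> bool" where
  "induced_C4_Bkf_free k f G \<longleftrightarrow>
     \<not> contains_induced G (cycle_graph 4) \<and> \<not> contains_induced G (blowup k f)"

end

theory Submission
  imports Defs "HOL-Library.FuncSet" "HOL-Analysis.Convex"
begin

text \<open>Write m = n/k and let E be any graph on the vertex set of B_{k,m} that differs from B_{k,m}
  in at most m^2/2 = n^2/(2k^2) pairs. A transversal picks one vertex from each of the k cliques;
  an edited pair lies in at most m^{k-2} transversals, so at least half of the m^k transversals
  avoid edited pairs. A Cauchy--Schwarz argument shows that one can fix a vertex of some part and
  keep a positive proportion of good transversals among the vertices compatible with it;
  iterating this produces sets X_i of 3f vertices in each clique with no edited pair between
  different X_i. If every X_i is still a clique of E, they span an induced B_{k,f}. Otherwise a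
  non-edge ab inside some X_i, together with vertices c, d of the two neighbouring parts, forms an
  induced C_4. For k = 3 the neighbouring parts are adjacent, so non-edges inside X_0 and X_1 are
  used instead, while a clique of size 3f already contains B_{3,f} = K_{3f}.\<close>

section \<open>Transversals avoiding a symmetric relation\<close>

definition cross_free :: "nat \<Rightarrow> (nat \<Rightarrow> 'a \<Rightarrow> nat \<Rightarrow> 'a \<Rightarrow> bool) \<Rightarrow> (nat \<Rightarrow> 'a set) \<Rightarrow> bool" where
  "cross_free k B X \<longleftrightarrow> (\<forall>i<k. \<forall>i'<k. i \<noteq> i' \<longrightarrow> (\<forall>a\<in>X i. \<forall>b\<in>X i'. \<not> B i a i' b))"

definition good_transversals ::
    "nat \<Rightarrow> (nat \<Rightarrow> 'a \<Rightarrow> nat \<Rightarrow> 'a \<Rightarrow> bool) \<Rightarrow> (nat \<Rightarrow> 'a set) \<Rightarrow> (nat \<Rightarrow> 'a) set" where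
  "good_transversals k B C = {t \<in> PiE {0..<k} C. cross_free k B (\<lambda>i. {t i})}"

lemma finite_good_transversals:
  assumes "\<And>i. i < k \<Longrightarrow> finite (C i)"
  shows "finite (good_transversals k B C)"
proof -
  have "finite (PiE {0..<k} C)" using assms by (intro finite_PiE) auto
  then show ?thesis unfolding good_transversals_def by simp
qed

lemma card_transversals_through_pair:
  assumes A: "finite A"
  shows "card {t \<in> PiE {0..<k} (\<lambda>_. A). \<exists>i<k. \<exists>i'<k. i \<noteq> i' \<and> {(i, t i), (i', t i')} = d}
           \<le> card A ^ (k - 2)"
    (is "card ?S \<le> _")
proof (cases "?S = {}")
  case False
  then obtain t0 i i' where ii: "i < k" "i' < k" "i \<noteq> i'" and d: "d = {(i, t0 i), (i', t0 i')}"
    by blast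
  define P where "P = PiE {0..<k} (\<lambda>j. if j = i then {t0 i} else if j = i' then {t0 i'} else A)"
  have S_sub: "?S \<subseteq> P"
    by (auto simp: P_def d PiE_def Pi_def doubleton_eq_iff)
  have P_finite: "finite P"
    using A by (auto simp: P_def intro!: finite_PiE)
  have "card P = card A ^ (k - 2)"
  proof -
    have "card P = (\<Prod>j\<in>{0..<k} - {i, i'}. card A)"
      using ii by (simp add: P_def card_PiE prod.subset_diff[of "{i, i'}" "{0..<k}"])
    also have "\<dots> = card A ^ (k - 2)"
      using ii by (simp add: card_Diff_subset numeral_2_eq_2)
    finally show ?thesis .
  qed
  then show ?thesis
    using card_mono[OF P_finite S_sub] by simp
next
  case True
  then show ?thesis
    unfolding True by simp
qed

lemma card_good_transversals_ge_half:
  fixes D :: "(nat \<times> 'a) set set"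
  assumes D: "finite D" "real (card D) \<le> real (card A)^2 / 2" and A: "finite A" and k: "k \<ge> 2"
  shows "real (card A) ^ k / 2 \<le> card (good_transversals k (\<lambda>i a i' b. {(i, a), (i', b)} \<in> D) (\<lambda>_. A))"
proof -
  define P where "P = PiE {0..<k} (\<lambda>_. A)"
  define T where "T = good_transversals k (\<lambda>i a i' b. {(i, a), (i', b)} \<in> D) (\<lambda>_. A)"
  define through where
    "through d = {t \<in> P. \<exists>i<k. \<exists>i'<k. i \<noteq> i' \<and> {(i, t i), (i', t i')} = d}" for d
  have P_finite: "finite P"
    using A by (simp add: P_def finite_PiE)
  have T_sub: "T \<subseteq> P"
    by (auto simp: T_def P_def good_transversals_def)
  have "P - T \<subseteq> (\<Union>d\<in>D. through d)"
    by (auto simp: P_def T_def through_def good_transversals_def cross_free_def)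
  then have "card (P - T) \<le> (\<Sum>d\<in>D. card (through d))"
    using P_finite D(1) by (intro le_trans[OF card_mono card_UN_le]) (auto simp: through_def)
  also have "\<dots> \<le> card D * card A ^ (k - 2)"
    using sum_mono[of D "\<lambda>d. card (through d)" "\<lambda>_. card A ^ (k - 2)"]
      card_transversals_through_pair[OF A] by (simp add: through_def P_def)
  finally have "real (card (P - T)) \<le> real (card D) * real (card A) ^ (k - 2)"
    by (metis of_nat_le_iff of_nat_mult of_nat_power)
  moreover have "real (card (P - T)) = real (card P) - card T"
    using T_sub P_finite by (simp add: card_Diff_subset finite_subset card_mono)
  ultimately have "real (card P) - card T \<le> real (card D) * real (card A) ^ (k - 2)"
    by simp
  also have "\<dots> \<le> real (card A)^2 / 2 * real (card A) ^ (k - 2)"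
    using D(2) by (intro mult_right_mono) auto
  also have "\<dots> = real (card A) ^ k / 2"
    using k by (metis le_add_diff_inverse power_add times_divide_eq_left)
  finally show ?thesis
    using A by (simp add: P_def T_def card_PiE)
qed

text \<open>The candidate sets that remain once x has been chosen in part i0.\<close>

definition commit ::
    "(nat \<Rightarrow> 'a \<Rightarrow> nat \<Rightarrow> 'a \<Rightarrow> bool) \<Rightarrow> nat \<Rightarrow> 'a \<Rightarrow> (nat \<Rightarrow> 'a set) \<Rightarrow> nat \<Rightarrow> 'a set" where
  "commit B i0 x C = (\<lambda>i. if i = i0 then C i - {x} else {y \<in> C i. \<not> B i0 x i y})"

lemma mem_PiE_commit:
  assumes "i0 < k"
  shows "t \<in> PiE {0..<k} (commit B i0 x C) \<longleftrightarrow>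
         t \<in> PiE {0..<k} C \<and> t i0 \<noteq> x \<and> (\<forall>i<k. i \<noteq> i0 \<longrightarrow> \<not> B i0 x i (t i))"
  using assms by (auto simp: commit_def PiE_def Pi_def)

lemma mem_good_transversals_commit:
  assumes sym: "\<And>i a i' b. B i a i' b \<Longrightarrow> B i' b i a" and "i0 < k" and "x \<in> C i0"
  shows "t \<in> good_transversals k B (commit B i0 x C) \<longleftrightarrow>
         t \<in> good_transversals k B C \<and> t i0 \<noteq> x \<and> t(i0 := x) \<in> good_transversals k B C"
proof -
  have upd: "t(i0 := x) \<in> PiE {0..<k} C \<longleftrightarrow> t \<in> extensional {0..<k} \<and> (\<forall>i<k. i \<noteq> i0 \<longrightarrow> t i \<in> C i)"
    using assms(2,3) by (auto simp: PiE_def Pi_def extensional_def)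
  show ?thesis
    unfolding good_transversals_def mem_Collect_eq mem_PiE_commit[OF assms(2)] upd cross_free_def
    using assms(2) by (auto simp: PiE_def Pi_def dest: sym)
qed

lemma card_PiE_le_power_pred:
  assumes "\<And>i. i < k \<Longrightarrow> card (C i) \<le> m" and "i0 < k" and "card (C i0) \<le> 1" and "m \<ge> 1"
  shows "card (PiE {0..<k} C) \<le> m ^ (k - 1)"
proof -
  have "card (PiE {0..<k} C) = (\<Prod>i\<in>{0..<k} - {i0}. card (C i)) * card (C i0)"
    using assms(2) by (simp add: card_PiE prod.remove mult.commute)
  also have "\<dots> \<le> (\<Prod>i\<in>{0..<k} - {i0}. card (C i))"
    using assms(3) by (metis mult.right_neutral mult_le_mono2)
  also have "\<dots> \<le> m ^ (k - 1)"
    using assms by (intro prod_le_power) auto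
  finally show ?thesis .
qed

lemma card_collisions_ge:
  fixes s :: "'a \<Rightarrow> 'b" and M :: real
  assumes T: "finite T" and M: "real (card (s ` T)) \<le> M" "M > 0"
  shows "real (card T)^2 / M - card T \<le> card {(t, t') \<in> T \<times> T. t \<noteq> t' \<and> s t = s t'}"
proof -
  define fib where "fib u = {t \<in> T. s t = u}" for u
  define A where "A = {(t, t') \<in> T \<times> T. s t = s t'}"
  have A_finite: "finite A"
    using T by (intro finite_subset[of A "T \<times> T"]) (auto simp: A_def)
  have fib_finite: "finite (fib u)" for u
    using T by (simp add: fib_def)
  have "card T = card (\<Union>u\<in>s ` T. fib u)"
    by (rule arg_cong[of _ _ card]) (auto simp: fib_def)
  also have "\<dots> = (\<Sum>u\<in>s ` T. card (fib u))"
    using T fib_finite by (intro card_UN_disjoint) (auto simp: fib_def)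
  finally have card_T: "card T = (\<Sum>u\<in>s ` T. card (fib u))" .
  have "card A = card (\<Union>u\<in>s ` T. fib u \<times> fib u)"
    by (rule arg_cong[of _ _ card]) (auto simp: A_def fib_def)
  also have "\<dots> = (\<Sum>u\<in>s ` T. card (fib u) ^ 2)"
    using T fib_finite by (subst card_UN_disjoint) (auto simp: fib_def card_cartesian_product power2_eq_square)
  finally have card_A: "card A = (\<Sum>u\<in>s ` T. card (fib u) ^ 2)" .
  have "real (card T)^2 \<le> real (card A) * card (s ` T)"
    using sum_squared_le_sum_of_squares[of "\<lambda>u. real (card (fib u))" "s ` T"]
    unfolding card_T card_A by simp
  also have "\<dots> \<le> real (card A) * M"
    using M by (intro mult_left_mono) auto
  finally have "real (card T)^2 / M \<le> card A"
    using M by (simp add: divide_le_eq)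
  moreover have "{(t, t') \<in> T \<times> T. t \<noteq> t' \<and> s t = s t'} = A - Id_on T"
    by (auto simp: A_def)
  moreover have "card (A - Id_on T) = card A - card T"
  proof -
    have diag: "Id_on T = (\<lambda>t. (t, t)) ` T" by auto
    then have "card (Id_on T) = card T" by (simp add: card_image inj_on_def)
    then show ?thesis using T A_finite diag by (subst card_Diff_subset) (auto simp: A_def)
  qed
  moreover have "card T \<le> card A"
    using A_finite by (intro card_inj_on_le[of "\<lambda>t. (t, t)"]) (auto simp: A_def inj_on_def)
  ultimately show ?thesis by simp
qed

text \<open>Two distinct good transversals t, t' that agree outside part i0 are determined by
  x = t' i0 and t, and t is then good for commit B i0 x C.\<close>

lemma card_good_transversals_sq_le_sum_commit:
  assumes sym: "\<And>i a i' b. B i a i' b \<Longrightarrow> B i' b i a" and i0: "i0 < k"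
    and C: "\<And>i. i < k \<Longrightarrow> finite (C i) \<and> card (C i) \<le> m" and m: "m \<ge> 1"
  shows "real (card (good_transversals k B C))^2 / real m ^ (k - 1) - card (good_transversals k B C)
           \<le> (\<Sum>x\<in>C i0. real (card (good_transversals k B (commit B i0 x C))))"
proof -
  define T where "T = good_transversals k B C"
  define forget :: "(nat \<Rightarrow> 'a) \<Rightarrow> nat \<Rightarrow> 'a" where "forget t = t(i0 := undefined)" for t
  define Q where "Q = Sigma (C i0) (\<lambda>x. good_transversals k B (commit B i0 x C))"
  have T_finite: "finite T"
    using C unfolding T_def by (intro finite_good_transversals) auto
  have commit_finite: "finite (good_transversals k B (commit B i0 x C))" for x
    using C by (intro finite_good_transversals) (auto simp: commit_def)
  have same_off_i0: "t' = t(i0 := t' i0)" if "forget t = forget t'" for t t'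
    using that by (auto simp: forget_def fun_eq_iff) metis
  have "forget ` T \<subseteq> PiE {0..<k} (C(i0 := {undefined}))"
    using i0 by (auto simp: forget_def T_def good_transversals_def PiE_def Pi_def extensional_def)
  moreover have "card (PiE {0..<k} (C(i0 := {undefined}))) \<le> m ^ (k - 1)"
    using C i0 m by (intro card_PiE_le_power_pred) auto
  moreover have "finite (PiE {0..<k} (C(i0 := {undefined})))"
    using C by (intro finite_PiE) auto
  ultimately have "card (forget ` T) \<le> m ^ (k - 1)"
    by (meson card_mono le_trans)
  then have "real (card T)^2 / real m ^ (k - 1) - card T
               \<le> card {(t, t') \<in> T \<times> T. t \<noteq> t' \<and> forget t = forget t'}"
    using m by (intro card_collisions_ge T_finite) (auto simp flip: of_nat_power)
  also have "\<dots> \<le> card Q"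
  proof (intro of_nat_mono card_inj_on_le[of "\<lambda>(t, t'). (t' i0, t)"])
    show "inj_on (\<lambda>(t, t'). (t' i0, t)) {(t, t') \<in> T \<times> T. t \<noteq> t' \<and> forget t = forget t'}"
      by (auto simp: inj_on_def) (metis same_off_i0)
    show "(\<lambda>(t, t'). (t' i0, t)) ` {(t, t') \<in> T \<times> T. t \<noteq> t' \<and> forget t = forget t'} \<subseteq> Q"
    proof clarify
      fix t t' assume "t \<in> T" "t' \<in> T" "t \<noteq> t'" "forget t = forget t'"
      moreover from this have "t' i0 \<in> C i0"
        using i0 by (auto simp: T_def good_transversals_def)
      ultimately show "(t' i0, t) \<in> Q"
        using mem_good_transversals_commit[where B = B, OF sym i0] same_off_i0[of t t']
        by (auto simp: Q_def T_def) (metis fun_upd_triv)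
    qed
    show "finite Q"
      using C i0 commit_finite by (auto simp: Q_def)
  qed
  also have "card Q = (\<Sum>x\<in>C i0. card (good_transversals k B (commit B i0 x C)))"
    using C i0 commit_finite by (simp add: Q_def)
  finally show ?thesis
    by (simp add: T_def)
qed

lemma exists_dense_commit:
  assumes sym: "\<And>i a i' b. B i a i' b \<Longrightarrow> B i' b i a" and i0: "i0 < k"
    and C: "\<And>i. i < k \<Longrightarrow> finite (C i) \<and> card (C i) \<le> m" and m: "m \<ge> 1"
    and c: "c > 0" and m_large: "2 / c \<le> real m"
    and dense: "c * real m ^ k \<le> card (good_transversals k B C)"
  shows "\<exists>x\<in>C i0. c^2 / 2 * real m ^ k \<le> card (good_transversals k B (commit B i0 x C))"
proof (rule ccontr)
  define N where "N = real (card (good_transversals k B C))"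
  define M where "M = real m ^ (k - 1)"
  define b where "b = c^2 / 2 * real m ^ k"
  assume "\<not> ?thesis"
  then have sparse: "real (card (good_transversals k B (commit B i0 x C))) < b" if "x \<in> C i0" for x
    using that by (auto simp: b_def)
  have M_pos: "M > 0" and "b > 0"
    using m c by (auto simp: M_def b_def)
  have mk: "real m ^ k = real m * M"
    using i0 by (cases k) (auto simp: M_def)
  have "c * real m \<ge> 2"
    using m_large c by (simp add: field_simps)
  moreover have "N \<ge> c * real m * M"
    using dense by (simp add: N_def mk algebra_simps)
  moreover from this have "N / M \<ge> c * real m"
    using M_pos by (simp add: field_simps)
  ultimately have "N / M - 1 \<ge> c * real m / 2" and "N \<ge> c * real m * M"
    by linarith+
  then have "N * (N / M - 1) \<ge> (c * real m * M) * (c * real m / 2)"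
    using c M_pos by (intro mult_mono) (auto simp: N_def)
  then have "real m * b \<le> N^2 / M - N"
    using M_pos by (simp add: b_def mk power2_eq_square field_simps)
  also have "\<dots> \<le> (\<Sum>x\<in>C i0. real (card (good_transversals k B (commit B i0 x C))))"
    using card_good_transversals_sq_le_sum_commit[OF sym i0 C m] by (simp add: N_def M_def)
  also have "\<dots> < real m * b"
  proof (cases "C i0 = {}")
    case False
    then have "(\<Sum>x\<in>C i0. real (card (good_transversals k B (commit B i0 x C)))) < real (card (C i0)) * b"
      using C i0 sparse sum_strict_mono[OF _ False sparse] by simp
    also have "\<dots> \<le> real m * b"
      using C i0 \<open>b > 0\<close> by (intro mult_right_mono) auto
    finally show ?thesis .
  qed (use m \<open>b > 0\<close> in simp)
  finally show False by simp
qed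

lemma cross_free_insert_commit:
  assumes sym: "\<And>i a i' b. B i a i' b \<Longrightarrow> B i' b i a" and i0: "i0 < k"
    and X: "cross_free k B X" and X_commit: "\<And>i. i < k \<Longrightarrow> X i \<subseteq> commit B i0 x C i"
  shows "cross_free k B (X(i0 := insert x (X i0)))"
proof -
  have away: "\<not> B i0 x j y" if "j < k" "j \<noteq> i0" "y \<in> X j" for j y
    using X_commit[OF that(1)] that by (auto simp: commit_def)
  show ?thesis
    unfolding cross_free_def
  proof (intro allI impI ballI)
    fix i i' a b
    assume ii: "i < k" "i' < k" "i \<noteq> i'"
      and a: "a \<in> (X(i0 := insert x (X i0))) i" and b: "b \<in> (X(i0 := insert x (X i0))) i'"
    consider "i = i0" "a = x" "b \<in> X i'" | "i' = i0" "b = x" "a \<in> X i" | "a \<in> X i" "b \<in> X i'"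
      using a b ii(3) by (auto split: if_splits)
    then show "\<not> B i a i' b"
    proof cases
      case 1
      then show ?thesis using away ii by blast
    next
      case 2
      then show ?thesis using away ii sym by blast
    next
      case 3
      then show ?thesis using X ii unfolding cross_free_def by blast
    qed
  qed
qed

text \<open>Each choice of a vertex turns density c into c^2/2 and needs m \<ge> 2/c.\<close>

fun density_threshold :: "nat \<Rightarrow> real \<Rightarrow> real" where
  "density_threshold 0 c = 0"
| "density_threshold (Suc r) c = max (2 / c) (density_threshold r (c^2 / 2))"

lemma cross_free_sets_exist:
  assumes sym: "\<And>i a i' b. B i a i' b \<Longrightarrow> B i' b i a" and m: "m \<ge> 1"
  shows "sum q {..<k} = r \<Longrightarrow> \<forall>i<k. finite (C i) \<and> card (C i) \<le> m \<Longrightarrow> c > 0 \<Longrightarrow>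
    c * real m ^ k \<le> card (good_transversals k B C) \<Longrightarrow> density_threshold r c \<le> real m \<Longrightarrow>
    \<exists>X. (\<forall>i<k. X i \<subseteq> C i \<and> card (X i) = q i) \<and> cross_free k B X"
proof (induction r arbitrary: q C c)
  case 0
  then show ?case
    by (intro exI[of _ "\<lambda>_. {}"]) (auto simp: cross_free_def)
next
  case (Suc r)
  obtain i0 where i0: "i0 < k" "q i0 > 0"
    using Suc.prems(1) by (metis lessThan_iff neq0_conv nat.distinct(1) sum.neutral)
  have C: "\<And>i. i < k \<Longrightarrow> finite (C i) \<and> card (C i) \<le> m"
    using Suc.prems(2) by blast
  obtain x where x: "x \<in> C i0"
    and dense: "c^2 / 2 * real m ^ k \<le> card (good_transversals k B (commit B i0 x C))"
    using exists_dense_commit[OF sym i0(1) C m Suc.prems(3) _ Suc.prems(4)] Suc.prems(5) by auto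
  define q' where "q' = q(i0 := q i0 - 1)"
  have "sum q' {..<k} = r"
    using Suc.prems(1) i0 by (simp add: q'_def sum.remove)
  moreover have "\<forall>i<k. finite (commit B i0 x C i) \<and> card (commit B i0 x C i) \<le> m"
    using C by (auto simp: commit_def intro: le_trans[OF card_mono])
  ultimately obtain X where X: "\<forall>i<k. X i \<subseteq> commit B i0 x C i \<and> card (X i) = q' i"
    and X_free: "cross_free k B X"
    using Suc.IH[of q' "commit B i0 x C" "c^2 / 2"] dense Suc.prems(3,5) by auto
  have "X i0 \<subseteq> C i0 - {x}"
    using X[rule_format, OF i0(1)] by (simp add: commit_def)
  then have "x \<notin> X i0" and "finite (X i0)"
    using C[of i0] i0(1) by (auto intro: finite_subset)
  moreover have "X i \<subseteq> C i" if "i < k" for i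
    using X that by (auto simp: commit_def split: if_splits)
  ultimately have "\<forall>i<k. (X(i0 := insert x (X i0))) i \<subseteq> C i \<and> card ((X(i0 := insert x (X i0))) i) = q i"
    using X x i0 by (auto simp: q'_def)
  moreover have "cross_free k B (X(i0 := insert x (X i0)))"
    using cross_free_insert_commit[OF sym i0(1) X_free] X by blast
  ultimately show ?case
    by blast
qed

section \<open>Induced subgraphs of blow-ups of cycles\<close>

lemma cycle_neighbours:
  fixes i k :: nat
  assumes "4 \<le> k" "i < k"
  shows "(i + 1) mod k \<noteq> i" "(i + k - 1) mod k \<noteq> i" "(i + k - 1) mod k \<noteq> (i + 1) mod k"
    "((i + k - 1) mod k + 1) mod k = i" "((i + 1) mod k + 1) mod k \<noteq> (i + k - 1) mod k"
  using assms by (auto simp: mod_if)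

lemma fst_blowup: "fst (blowup k m) = {0..<k} \<times> {0..<m}"
  by (simp add: blowup_def)

lemma blowup_edge_iff:
  assumes "i < k" "i' < k" "j < m" "j' < m" "(i, j) \<noteq> (i', j')"
  shows "{(i, j), (i', j')} \<in> snd (blowup k m) \<longleftrightarrow> i' = i \<or> i' = (i + 1) mod k \<or> i = (i' + 1) mod k"
proof
  assume "{(i, j), (i', j')} \<in> snd (blowup k m)"
  then obtain i1 j1 i2 j2 where "{(i, j), (i', j')} = {(i1, j1), (i2, j2)}" "i2 = i1 \<or> i2 = (i1 + 1) mod k"
    unfolding blowup_def by auto
  then show "i' = i \<or> i' = (i + 1) mod k \<or> i = (i' + 1) mod k"
    by (auto simp: doubleton_eq_iff)
next
  have mem: "{(a, b), (a', b')} \<in> snd (blowup k m)"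
    if "a < k" "a' < k" "b < m" "b' < m" "(a, b) \<noteq> (a', b')" "a' = a \<or> a' = (a + 1) mod k" for a b a' b'
    unfolding blowup_def snd_conv mem_Collect_eq
    by (intro exI[of _ a] exI[of _ b] exI[of _ a'] exI[of _ b']) (use that in simp)
  assume "i' = i \<or> i' = (i + 1) mod k \<or> i = (i' + 1) mod k"
  then consider "i' = i \<or> i' = (i + 1) mod k" | "i = (i' + 1) mod k"
    by blast
  then show "{(i, j), (i', j')} \<in> snd (blowup k m)"
  proof cases
    case 1
    then show ?thesis using assms mem by blast
  next
    case 2
    then have "{(i', j'), (i, j)} \<in> snd (blowup k m)"
      using assms mem[of i' i j' j] by auto
    then show ?thesis by (simp add: insert_commute)
  qed
qed

lemma snd_cycle_graph_4: "snd (cycle_graph 4) = {{0, 1}, {1, 2}, {2, 3}, {3, 0}}"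
proof -
  have "{i :: nat. i < 4} = {0, 1, 2, 3}"
    by auto
  moreover have "((0 :: nat) + 1) mod 4 = 1" "((1 :: nat) + 1) mod 4 = 2" "((2 :: nat) + 1) mod 4 = 3"
    "((3 :: nat) + 1) mod 4 = 0"
    by simp_all
  ultimately have "(\<lambda>i. {i, (i + 1) mod 4}) ` {i :: nat. i < 4} = {{0, 1}, {1, 2}, {2, 3}, {3, 0}}"
    by (simp only: image_insert image_empty)
  then show ?thesis
    unfolding cycle_graph_def snd_conv setcompr_eq_image .
qed

lemma contains_induced_cycle_4I:
  assumes "w \<in> V" "x \<in> V" "y \<in> V" "z \<in> V"
    and "w \<noteq> x" "w \<noteq> y" "w \<noteq> z" "x \<noteq> y" "x \<noteq> z" "y \<noteq> z"
    and "{w, x} \<in> E" "{x, y} \<in> E" "{y, z} \<in> E" "{z, w} \<in> E"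
    and "{w, y} \<notin> E" "{x, z} \<notin> E"
  shows "contains_induced (V, E) (cycle_graph 4)"
proof -
  define \<phi> where "\<phi> u = (if u = 0 then w else if u = 1 then x else if u = 2 then y else z)" for u :: nat
  have "fst (cycle_graph 4) = {0, 1, 2, 3}"
    by (auto simp: cycle_graph_def)
  moreover have "inj_on \<phi> {0, 1, 2, 3}" and "\<phi> ` {0, 1, 2, 3} \<subseteq> V"
    using assms(1-10) by (auto simp: \<phi>_def inj_on_def)
  moreover have "{u, v} \<in> {{0, 1}, {1, 2}, {2, 3}, {3, 0}} \<longleftrightarrow> {\<phi> u, \<phi> v} \<in> E"
    if "u \<in> {0, 1, 2, 3}" "v \<in> {0, 1, 2, 3}" "u \<noteq> v" for u v :: nat
    using that assms(11-16) by (auto simp: \<phi>_def doubleton_eq_iff insert_commute)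
  ultimately show ?thesis
    unfolding contains_induced_def snd_cycle_graph_4 by (intro exI[of _ \<phi>]) auto
qed

lemma blowup_3_complete:
  assumes "u \<in> fst (blowup 3 f)" "v \<in> fst (blowup 3 f)" "u \<noteq> v"
  shows "{u, v} \<in> snd (blowup 3 f)"
proof -
  obtain i j i' j' where uv: "u = (i, j)" "v = (i', j')" "i < 3" "j < f" "i' < 3" "j' < f"
    using assms(1,2) by (auto simp: fst_blowup)
  moreover have "i = 0 \<or> i = 1 \<or> i = 2" "i' = 0 \<or> i' = 1 \<or> i' = 2"
    using uv(3,5) by arith+
  ultimately have "i' = i \<or> i' = (i + 1) mod 3 \<or> i = (i' + 1) mod 3"
    by (elim disjE) simp_all
  then show ?thesis
    using blowup_edge_iff[OF uv(3,5,4,6)] assms(3) uv(1,2) by simp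
qed

lemma contains_induced_blowup_3_of_clique:
  assumes Y: "Y \<subseteq> V" "finite Y" "3 * f \<le> card Y"
    and clique: "\<And>y y'. y \<in> Y \<Longrightarrow> y' \<in> Y \<Longrightarrow> y \<noteq> y' \<Longrightarrow> {y, y'} \<in> E"
  shows "contains_induced (V, E) (blowup 3 f)"
proof -
  obtain \<phi> where \<phi>: "\<phi> ` fst (blowup 3 f) \<subseteq> Y" "inj_on \<phi> (fst (blowup 3 f))"
    using card_le_inj[of "fst (blowup 3 f)" Y] Y(2,3) by (auto simp: fst_blowup card_cartesian_product)
  have "{u, v} \<in> snd (blowup 3 f) \<longleftrightarrow> {\<phi> u, \<phi> v} \<in> E"
    if "u \<in> fst (blowup 3 f)" "v \<in> fst (blowup 3 f)" "u \<noteq> v" for u v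
  proof -
    have "\<phi> u \<in> Y" "\<phi> v \<in> Y" "\<phi> u \<noteq> \<phi> v"
      using \<phi> that by (auto simp: inj_on_def)
    then show ?thesis
      using blowup_3_complete[OF that] clique by simp
  qed
  then show ?thesis
    unfolding contains_induced_def using \<phi> Y(1) by (intro exI[of _ \<phi>]) auto
qed

lemma contains_induced_blowupI:
  assumes X: "\<And>i. i < k \<Longrightarrow> X i \<subseteq> {0..<m} \<and> f \<le> card (X i)"
    and cross: "\<And>i i' a b. i < k \<Longrightarrow> i' < k \<Longrightarrow> i \<noteq> i' \<Longrightarrow> a \<in> X i \<Longrightarrow> b \<in> X i' \<Longrightarrow>
        {(i, a), (i', b)} \<in> E \<longleftrightarrow> {(i, a), (i', b)} \<in> snd (blowup k m)"
    and clique: "\<And>i a b. i < k \<Longrightarrow> a \<in> X i \<Longrightarrow> b \<in> X i \<Longrightarrow> a \<noteq> b \<Longrightarrow> {(i, a), (i, b)} \<in> E"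
  shows "contains_induced (fst (blowup k m), E) (blowup k f)"
proof -
  have "\<forall>i. \<exists>g. i < k \<longrightarrow> inj_on g {0..<f} \<and> g ` {0..<f} \<subseteq> X i"
  proof
    fix i
    show "\<exists>g. i < k \<longrightarrow> inj_on g {0..<f} \<and> g ` {0..<f} \<subseteq> X i"
    proof (cases "i < k")
      case True
      then have "finite (X i)"
        using X finite_subset by blast
      then show ?thesis
        using card_le_inj[of "{0..<f}" "X i"] X[OF True] by auto
    qed simp
  qed
  then obtain g where "\<forall>i. i < k \<longrightarrow> inj_on (g i) {0..<f} \<and> g i ` {0..<f} \<subseteq> X i"
    by (rule choice[THEN exE])
  then have g: "\<And>i. i < k \<Longrightarrow> inj_on (g i) {0..<f} \<and> g i ` {0..<f} \<subseteq> X i"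
    by blast
  define \<phi> where "\<phi> = (\<lambda>(i, j). (i, g i j))"
  have "inj_on \<phi> (fst (blowup k f))"
  proof (rule inj_onI)
    fix u v assume "u \<in> fst (blowup k f)" "v \<in> fst (blowup k f)" "\<phi> u = \<phi> v"
    then obtain i j j' where "u = (i, j)" "v = (i, j')" "i < k" "j < f" "j' < f" "g i j = g i j'"
      by (auto simp: \<phi>_def fst_blowup)
    then show "u = v"
      using inj_onD[of "g i" "{0..<f}" j j'] g by simp
  qed
  moreover have "\<phi> ` fst (blowup k f) \<subseteq> fst (blowup k m)"
    using g X by (fastforce simp: \<phi>_def fst_blowup)
  moreover have "{u, v} \<in> snd (blowup k f) \<longleftrightarrow> {\<phi> u, \<phi> v} \<in> E"
    if uv: "u \<in> fst (blowup k f)" "v \<in> fst (blowup k f)" "u \<noteq> v" for u v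
  proof -
    obtain i j i' j' where ij: "u = (i, j)" "v = (i', j')" "i < k" "j < f" "i' < k" "j' < f"
      using uv(1,2) by (auto simp: fst_blowup)
    have in_X: "g i j \<in> X i" "g i' j' \<in> X i'"
      using g[OF ij(3)] g[OF ij(5)] ij by auto
    then have "g i j < m" "g i' j' < m"
      using X[OF ij(3)] X[OF ij(5)] by auto
    show ?thesis
    proof (cases "i = i'")
      case True
      then have "g i j \<noteq> g i j'"
        using g[of i] ij uv(3) by (auto simp: inj_on_def)
      then show ?thesis
        using True ij uv(3) in_X clique blowup_edge_iff[OF ij(3,5,4,6)] by (simp add: \<phi>_def)
    next
      case False
      then show ?thesis
        using ij in_X cross blowup_edge_iff[OF ij(3,5,4,6)]
          blowup_edge_iff[OF ij(3,5) \<open>g i j < m\<close> \<open>g i' j' < m\<close>]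
        by (simp add: \<phi>_def)
    qed
  qed
  ultimately show ?thesis
    unfolding contains_induced_def by (intro exI[of _ \<phi>]) auto
qed

lemma induced_C4_or_blowup_3:
  fixes X :: "nat \<Rightarrow> nat set"
  assumes X: "\<And>i. i < 2 \<Longrightarrow> X i \<subseteq> {0..<m} \<and> 3 * f \<le> card (X i)"
    and cross: "\<And>a b. a \<in> X 0 \<Longrightarrow> b \<in> X 1 \<Longrightarrow> {(0, a), (1, b)} \<in> E"
  shows "contains_induced (fst (blowup 3 m), E) (cycle_graph 4)
         \<or> contains_induced (fst (blowup 3 m), E) (blowup 3 f)"
proof (rule disjCI)
  assume no_blowup: "\<not> contains_induced (fst (blowup 3 m), E) (blowup 3 f)"
  have non_clique: "\<exists>a\<in>X i. \<exists>b\<in>X i. a \<noteq> b \<and> {(i, a), (i, b)} \<notin> E" if "i < 2" for i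
  proof (rule ccontr)
    assume "\<not> ?thesis"
    then have "contains_induced (fst (blowup 3 m), E) (blowup 3 f)"
      using X[OF that] that
      by (intro contains_induced_blowup_3_of_clique[of "{i} \<times> X i"])
        (auto simp: fst_blowup card_cartesian_product intro: finite_subset)
    with no_blowup show False by simp
  qed
  obtain a b where ab: "a \<in> X 0" "b \<in> X 0" "a \<noteq> b" "{(0, a), (0, b)} \<notin> E"
    using non_clique[of 0] by auto
  obtain c d where cd: "c \<in> X 1" "d \<in> X 1" "c \<noteq> d" "{(1, c), (1, d)} \<notin> E"
    using non_clique[of 1] by auto
  have edges: "{(0, a), (1, c)} \<in> E" "{(1, c), (0, b)} \<in> E" "{(0, b), (1, d)} \<in> E" "{(1, d), (0, a)} \<in> E"
    using cross[of a c] cross[of b c] cross[of b d] cross[of a d] ab cd by (simp_all add: insert_commute)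
  have vertices: "(0, a) \<in> fst (blowup 3 m)" "(1, c) \<in> fst (blowup 3 m)"
    "(0, b) \<in> fst (blowup 3 m)" "(1, d) \<in> fst (blowup 3 m)"
    using X[of 0] X[of 1] ab cd by (auto simp: fst_blowup)
  show "contains_induced (fst (blowup 3 m), E) (cycle_graph 4)"
    using contains_induced_cycle_4I[OF vertices _ _ _ _ _ _ edges ab(4) cd(4)] ab(3) cd(3) by simp
qed

lemma induced_C4_or_blowup_ge_4:
  assumes k: "4 \<le> k" and X: "\<And>i. i < k \<Longrightarrow> X i \<subseteq> {0..<m} \<and> f \<le> card (X i)" and f: "f \<ge> 1"
    and cross: "\<And>i i' a b. i < k \<Longrightarrow> i' < k \<Longrightarrow> i \<noteq> i' \<Longrightarrow> a \<in> X i \<Longrightarrow> b \<in> X i' \<Longrightarrow>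
        {(i, a), (i', b)} \<in> E \<longleftrightarrow> {(i, a), (i', b)} \<in> snd (blowup k m)"
  shows "contains_induced (fst (blowup k m), E) (cycle_graph 4)
         \<or> contains_induced (fst (blowup k m), E) (blowup k f)"
proof (cases "\<forall>i<k. \<forall>a\<in>X i. \<forall>b\<in>X i. a \<noteq> b \<longrightarrow> {(i, a), (i, b)} \<in> E")
  case True
  then have clique: "\<And>i a b. i < k \<Longrightarrow> a \<in> X i \<Longrightarrow> b \<in> X i \<Longrightarrow> a \<noteq> b \<Longrightarrow> {(i, a), (i, b)} \<in> E"
    by blast
  have "contains_induced (fst (blowup k m), E) (blowup k f)"
    using contains_induced_blowupI[OF X cross clique] .
  then show ?thesis ..
next
  case False
  then obtain i a b where i: "i < k" and ab: "a \<in> X i" "b \<in> X i" "a \<noteq> b" "{(i, a), (i, b)} \<notin> E"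
    by blast
  define i1 where "i1 = (i + 1) mod k"
  define i2 where "i2 = (i + k - 1) mod k"
  have i12: "i1 < k" "i2 < k"
    using i by (auto simp: i1_def i2_def)
  have "X i1 \<noteq> {}" "X i2 \<noteq> {}"
    using X[OF i12(1)] X[OF i12(2)] f by auto
  then obtain c d where cd: "c \<in> X i1" "d \<in> X i2"
    by blast
  have edge_iff: "{(j, x), (j', y)} \<in> E \<longleftrightarrow> j' = (j + 1) mod k \<or> j = (j' + 1) mod k"
    if "j < k" "j' < k" "j \<noteq> j'" "x \<in> X j" "y \<in> X j'" for j j' x y
  proof -
    have "x < m" "y < m"
      using X[OF that(1)] X[OF that(2)] that(4,5) by auto
    then show ?thesis
      using cross[OF that] blowup_edge_iff[of j k j' x m y] that(1-3) by auto
  qed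
  note nbrs = cycle_neighbours[OF k i, folded i1_def i2_def]
  have edges: "{(i, a), (i1, c)} \<in> E" "{(i1, c), (i, b)} \<in> E" "{(i, b), (i2, d)} \<in> E" "{(i2, d), (i, a)} \<in> E"
    using edge_iff[of i i1 a c] edge_iff[of i1 i c b] edge_iff[of i i2 b d] edge_iff[of i2 i d a]
      i i12 ab cd nbrs by (simp_all add: i1_def)
  have non_edge: "{(i1, c), (i2, d)} \<notin> E"
    using edge_iff[of i1 i2 c d] i12 cd nbrs by simp
  have vertices: "(i, a) \<in> fst (blowup k m)" "(i1, c) \<in> fst (blowup k m)"
    "(i, b) \<in> fst (blowup k m)" "(i2, d) \<in> fst (blowup k m)"
    using X[OF i] X[OF i12(1)] X[OF i12(2)] i i12 ab cd by (auto simp: fst_blowup)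
  have "contains_induced (fst (blowup k m), E) (cycle_graph 4)"
    using contains_induced_cycle_4I[OF vertices _ _ _ _ _ _ edges ab(4) non_edge] ab(3) nbrs by simp
  then show ?thesis ..
qed

section \<open>Distance of blow-ups from induced freeness\<close>

lemma finite_blowup_edges: "finite (snd (blowup k m))"
proof (rule finite_subset)
  show "snd (blowup k m) \<subseteq> Pow (fst (blowup k m))"
    by (auto simp: blowup_def)
qed (simp add: fst_blowup)

lemma unedited_parts_exist:
  assumes k: "2 \<le> k" and m: "1 \<le> m" and m_large: "density_threshold (k * q) (1 / 2) \<le> real m"
    and E: "finite E"
    and close: "real (card ((snd (blowup k m) - E) \<union> (E - snd (blowup k m)))) \<le> real m ^ 2 / 2"
  obtains X where "\<And>i. i < k \<Longrightarrow> X i \<subseteq> {0..<m} \<and> card (X i) = q"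
    and "\<And>i i' a b. i < k \<Longrightarrow> i' < k \<Longrightarrow> i \<noteq> i' \<Longrightarrow> a \<in> X i \<Longrightarrow> b \<in> X i' \<Longrightarrow>
        {(i, a), (i', b)} \<in> E \<longleftrightarrow> {(i, a), (i', b)} \<in> snd (blowup k m)"
proof -
  define D where "D = (snd (blowup k m) - E) \<union> (E - snd (blowup k m))"
  define B where "B i a i' b \<longleftrightarrow> {(i, a), (i', b)} \<in> D" for i a i' b
  have sym: "\<And>i a i' b. B i a i' b \<Longrightarrow> B i' b i a"
    by (simp add: B_def insert_commute)
  have "finite D"
    using E finite_blowup_edges by (simp add: D_def)
  then have "real m ^ k / 2 \<le> card (good_transversals k B (\<lambda>_. {0..<m}))"
    using card_good_transversals_ge_half[of D "{0..<m}" k] close k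
    by (simp add: B_def[abs_def] D_def)
  then obtain X where "\<forall>i<k. X i \<subseteq> {0..<m} \<and> card (X i) = q" and X_free: "cross_free k B X"
    using cross_free_sets_exist[where B = B, OF sym m,
        where k = k and q = "\<lambda>_. q" and r = "k * q" and C = "\<lambda>_. {0..<m}" and c = "1 / 2"] m_large
    by auto
  moreover have "{(i, a), (i', b)} \<in> E \<longleftrightarrow> {(i, a), (i', b)} \<in> snd (blowup k m)"
    if "i < k" "i' < k" "i \<noteq> i'" "a \<in> X i" "b \<in> X i'" for i i' a b
    using X_free that unfolding cross_free_def B_def D_def by blast
  ultimately show ?thesis
    using that by blast
qed

lemma not_induced_C4_Bkf_free_if_close:
  assumes k: "3 \<le> k" and f: "1 \<le> f" and m: "1 \<le> m"
    and m_large: "density_threshold (k * (3 * f)) (1 / 2) \<le> real m"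
    and E: "finite E"
    and close: "real (card ((snd (blowup k m) - E) \<union> (E - snd (blowup k m)))) \<le> real m ^ 2 / 2"
  shows "\<not> induced_C4_Bkf_free k f (fst (blowup k m), E)"
proof -
  obtain X where X: "\<And>i. i < k \<Longrightarrow> X i \<subseteq> {0..<m} \<and> card (X i) = 3 * f"
    and agree: "\<And>i i' a b. i < k \<Longrightarrow> i' < k \<Longrightarrow> i \<noteq> i' \<Longrightarrow> a \<in> X i \<Longrightarrow> b \<in> X i' \<Longrightarrow>
        {(i, a), (i', b)} \<in> E \<longleftrightarrow> {(i, a), (i', b)} \<in> snd (blowup k m)"
    using unedited_parts_exist[of k m "3 * f" E] assms by auto
  show ?thesis
  proof (cases "k = 3")
    case True
    have cross: "{(0, a), (1, b)} \<in> E" if "a \<in> X 0" "b \<in> X 1" for a b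
    proof -
      have "a < m" "b < m"
        using X[of 0] X[of 1] True that by auto
      then show ?thesis
        using agree[of 0 1 a b] blowup_edge_iff[of 0 3 1 a m b] True that by simp
    qed
    have "\<And>i. i < 2 \<Longrightarrow> X i \<subseteq> {0..<m} \<and> 3 * f \<le> card (X i)"
      using X True by simp
    then have "contains_induced (fst (blowup 3 m), E) (cycle_graph 4)
        \<or> contains_induced (fst (blowup 3 m), E) (blowup 3 f)"
      using induced_C4_or_blowup_3 cross by blast
    then show ?thesis
      using True by (simp add: induced_C4_Bkf_free_def)
  next
    case False
    have "\<And>i. i < k \<Longrightarrow> X i \<subseteq> {0..<m} \<and> f \<le> card (X i)"
      using X by simp
    then have "contains_induced (fst (blowup k m), E) (cycle_graph 4)
        \<or> contains_induced (fst (blowup k m), E) (blowup k f)"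
      using induced_C4_or_blowup_ge_4[of k X m f E] k False f agree by simp
    then show ?thesis
      by (simp add: induced_C4_Bkf_free_def)
  qed
qed

theorem lemma5p3:
  fixes k f :: nat
  assumes "k \<ge> 3" and "f \<ge> 1"
  shows "\<exists>n1. \<forall>n\<ge>n1. k dvd n \<longrightarrow>
           far_from (1 / (2 * real k ^ 2)) (induced_C4_Bkf_free k f) (blowup k (n div k))"
proof -
  define m0 where "m0 = nat \<lceil>density_threshold (k * (3 * f)) (1 / 2)\<rceil> + 1"
  show ?thesis
  proof (intro exI[of _ "k * m0"] allI impI)
    fix n assume "k * m0 \<le> n" "k dvd n"
    define m where "m = n div k"
    have "m0 \<le> m"
      using \<open>k * m0 \<le> n\<close> \<open>k dvd n\<close> assms(1) by (auto simp: m_def)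
    then have m: "1 \<le> m" "density_threshold (k * (3 * f)) (1 / 2) \<le> real m"
      unfolding m0_def by linarith+
    have eps_n2: "1 / (2 * real k ^ 2) * real (card (fst (blowup k m))) ^ 2 = real m ^ 2 / 2"
      using assms(1) by (simp add: fst_blowup card_cartesian_product power_mult_distrib)
    show "far_from (1 / (2 * real k ^ 2)) (induced_C4_Bkf_free k f) (blowup k (n div k))"
      unfolding far_from_def m_def[symmetric]
    proof (intro allI impI)
      fix E assume E: "simple_graph (fst (blowup k m), E) \<and> induced_C4_Bkf_free k f (fst (blowup k m), E)"
      then have "E \<subseteq> Pow (fst (blowup k m))"
        by (auto simp: simple_graph_def)
      then have "finite E"
        by (rule finite_subset) (simp add: fst_blowup)
      then show "1 / (2 * real k ^ 2) * real (card (fst (blowup k m))) ^ 2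
          \<le> real (card ((snd (blowup k m) - E) \<union> (E - snd (blowup k m))))"
        using not_induced_C4_Bkf_free_if_close[OF assms m] E eps_n2 by fastforce
    qed
  qed
qed

end
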